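(* Let $D$ be a digraph and $k\ge 0$ an integer. If $\operatorname{dbw}(D)\le k$, then $\operatorname{bcrk}(\vec{L}(D))\le 2(k+1)$.
   Context: All digraphs are finite and loopless; $\vec{xy}$ denotes a directed edge from $x$ to $y$. A layout of a symmetric function $f:2^U\to\mathbb{Z}$ on a finite set $U$ is a pair $(T,\beta)$ with $T$ a tree of maximum degree at most three and $\beta$ a bijection from the leaves of $T$ to $U$; each edge of $T$ splits the leaves into two sides, with $Y$ the leaves on one side, and its order is $f(\beta(Y))$; the width of the layout is the maximum order of its edges (0 if none), and the layout-$f$-width of $U$ is the minimum width of a layout. Directed branch-width: for $X\subseteq E(D)$, $S^V_X=\{y: \exists x,z,\ \vec{xy}\in E(D)\setminus X,\ \vec{yz}\in X\}$ and $f_D(X)=|S^V_X\cup S^V_{E(D)\setminus X}|$; $\operatorname{dbw}(D)$ is the layout-$f_D$-width of $E(D)$. Directed line graph: $\vec{L}(D)$ has vertex set $E(D)$ and an edge $\vec{ef}$ whenever $e=\vec{wx}$, $f=\vec{xy}$ for some vertices $w,x,y$. Bi-cut-rank-width: with $M$ the $\mathrm{GF}(2)$ adjacency matrix of a digraph $H$ ($M_{uv}=1$ iff $\vec{uv}\in E(H)$), $g(X)=\operatorname{rk}(M[V(H)\setminus X,X])+\operatorname{rk}(M[X,V(H)\setminus X])$, and $\operatorname{bcrk}(H)$ is the layout-$g$-width of $V(H)$. *)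

theory Defs
  imports Complex_Main "HOL-Library.Z2" "HOL-Library.Function_Algebras"
begin

definition digraph :: "'v set \<Rightarrow> 'e set \<Rightarrow> ('e \<Rightarrow> 'v) \<Rightarrow> ('e \<Rightarrow> 'v) \<Rightarrow> bool" where
  "digraph V E tail head \<longleftrightarrow> finite V \<and> finite E \<and>
     (\<forall>e\<in>E. tail e \<in> V \<and> head e \<in> V \<and> tail e \<noteq> head e)"

definition tree_rel :: "nat set set \<Rightarrow> (nat \<times> nat) set" where
  "tree_rel TE = {(a, b). {a, b} \<in> TE}"

definition is_tree :: "nat set \<Rightarrow> nat set set \<Rightarrow> bool" where
  "is_tree N TE \<longleftrightarrow> finite N \<and> N \<noteq> {} \<and>
     (\<forall>e\<in>TE. \<exists>u v. e = {u, v} \<and> u \<noteq> v \<and> u \<in> N \<and> v \<in> N) \<and>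
     (\<forall>u\<in>N. \<forall>v\<in>N. (u, v) \<in> (tree_rel TE)\<^sup>*) \<and>
     \<not> (\<exists>cs. 3 \<le> length cs \<and> distinct cs \<and>
          (\<forall>i < length cs. {cs ! i, cs ! ((i + 1) mod length cs)} \<in> TE))"

definition tdegree :: "nat set set \<Rightarrow> nat \<Rightarrow> nat" where
  "tdegree TE v = card {u. {u, v} \<in> TE}"

definition tleaves :: "nat set \<Rightarrow> nat set set \<Rightarrow> nat set" where
  "tleaves N TE = {v \<in> N. tdegree TE v \<le> 1}"

definition is_layout :: "'u set \<Rightarrow> nat set \<Rightarrow> nat set set \<Rightarrow> (nat \<Rightarrow> 'u) \<Rightarrow> bool" where
  "is_layout U N TE \<beta> \<longleftrightarrow> is_tree N TE \<and> (\<forall>v\<in>N. tdegree TE v \<le> 3) \<and>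
     bij_betw \<beta> (tleaves N TE) U"

definition tside :: "nat set \<Rightarrow> nat set set \<Rightarrow> nat set \<Rightarrow> nat \<Rightarrow> nat set" where
  "tside N TE e a = {l \<in> tleaves N TE. (a, l) \<in> (tree_rel (TE - {e}))\<^sup>*}"

definition layout_width_of ::
    "('u set \<Rightarrow> nat) \<Rightarrow> nat set \<Rightarrow> nat set set \<Rightarrow> (nat \<Rightarrow> 'u) \<Rightarrow> nat" where
  "layout_width_of f N TE \<beta> =
     Max (insert 0 {f (\<beta> ` tside N TE e a) | e a. e \<in> TE \<and> a \<in> e})"

definition layout_width :: "'u set \<Rightarrow> ('u set \<Rightarrow> nat) \<Rightarrow> nat" where
  "layout_width U f =
     Inf {layout_width_of f N TE \<beta> | N TE \<beta>. is_layout U N TE \<beta>}"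

definition SV :: "'e set \<Rightarrow> ('e \<Rightarrow> 'v) \<Rightarrow> ('e \<Rightarrow> 'v) \<Rightarrow> 'e set \<Rightarrow> 'v set" where
  "SV E tail head X = {y. \<exists>e \<in> E - X. \<exists>f \<in> X. head e = y \<and> tail f = y}"

definition fD :: "'e set \<Rightarrow> ('e \<Rightarrow> 'v) \<Rightarrow> ('e \<Rightarrow> 'v) \<Rightarrow> 'e set \<Rightarrow> nat" where
  "fD E tail head X = card (SV E tail head X \<union> SV E tail head (E - X))"

definition dbw :: "'e set \<Rightarrow> ('e \<Rightarrow> 'v) \<Rightarrow> ('e \<Rightarrow> 'v) \<Rightarrow> nat" where
  "dbw E tail head = layout_width E (fD E tail head)"

definition line_adj :: "'e set \<Rightarrow> ('e \<Rightarrow> 'v) \<Rightarrow> ('e \<Rightarrow> 'v) \<Rightarrow> 'e \<Rightarrow> 'e \<Rightarrow> bool" where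
  "line_adj E tail head e f \<longleftrightarrow> e \<in> E \<and> f \<in> E \<and> head e = tail f"

text \<open>Rank over GF(2) of the submatrix M[R,C] of the adjacency matrix of adj:
  dimension of the span of its row vectors.\<close>

definition gf2_rank :: "('w \<Rightarrow> 'w \<Rightarrow> bool) \<Rightarrow> 'w set \<Rightarrow> 'w set \<Rightarrow> nat" where
  "gf2_rank adj R C =
     vector_space.dim (\<lambda>(c::bit) (x::'w \<Rightarrow> bit). (\<lambda>v. c * x v))
       {(\<lambda>v. if v \<in> C \<and> adj u v then (1::bit) else 0) | u. u \<in> R}"

definition bicut_rank :: "'w set \<Rightarrow> ('w \<Rightarrow> 'w \<Rightarrow> bool) \<Rightarrow> 'w set \<Rightarrow> nat" where
  "bicut_rank W adj X = gf2_rank adj (W - X) X + gf2_rank adj X (W - X)"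

definition bcrk :: "'w set \<Rightarrow> ('w \<Rightarrow> 'w \<Rightarrow> bool) \<Rightarrow> nat" where
  "bcrk W adj = layout_width W (bicut_rank W adj)"

end

theory Submission
  imports Defs
begin

text \<open>In the directed line graph, edge u points to edge v exactly when u enters the vertex
  that v leaves. Hence every row of an adjacency submatrix M[R,C] is either zero or the
  indicator of the edges of C leaving one vertex, namely the head of the row edge. Its rank
  over GF(2) is thus at most the number of vertices at which some edge of R meets an edge of C.
  For R = E - X and C = X these vertices form S(X), and for R = X and C = E - X they form
  S(E - X), so the bi-cut-rank of X in the line graph is at most 2 f_D(X). Using one and the same
  layout for both width functions gives bcrk(L(D)) \<le> 2 dbw(D).\<close>

lemma vector_space_bit_fun: "vector_space (\<lambda>(c::bit) (x::'w \<Rightarrow> bit). (\<lambda>v. c * x v))"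
  by unfold_locales (auto simp: fun_eq_iff algebra_simps)

lemma gf2_rank_line_adj_le:
  fixes E :: "'e set" and tail head :: "'e \<Rightarrow> 'v"
  assumes "finite Y"
    and meets_in_Y: "\<And>u v. u \<in> R \<Longrightarrow> u \<in> E \<Longrightarrow> v \<in> C \<Longrightarrow> v \<in> E \<Longrightarrow> head u = tail v \<Longrightarrow> head u \<in> Y"
  shows "gf2_rank (line_adj E tail head) R C \<le> card Y"
proof -
  interpret vector_space "\<lambda>(c::bit) (x::'e \<Rightarrow> bit). (\<lambda>v. c * x v)"
    by (rule vector_space_bit_fun)
  define out_row where "out_row y = (\<lambda>v. if v \<in> C \<and> v \<in> E \<and> tail v = y then (1::bit) else 0)" for y
  have rows_in_span: "{(\<lambda>v. if v \<in> C \<and> line_adj E tail head u v then (1::bit) else 0) | u. u \<in> R}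
      \<subseteq> span (out_row ` Y)"
  proof clarify
    fix u assume "u \<in> R"
    let ?row = "\<lambda>v. if v \<in> C \<and> line_adj E tail head u v then (1::bit) else 0"
    show "?row \<in> span (out_row ` Y)"
    proof (cases "u \<in> E \<and> (\<exists>v\<in>C. v \<in> E \<and> head u = tail v)")
      case True
      then have "head u \<in> Y" using meets_in_Y \<open>u \<in> R\<close> by blast
      moreover have "?row = out_row (head u)"
        using True by (auto simp: out_row_def line_adj_def fun_eq_iff)
      ultimately show ?thesis by (metis span_base imageI)
    next
      case False
      then have "?row = 0" by (auto simp: line_adj_def fun_eq_iff)
      then show ?thesis by (metis span_zero)
    qed
  qed
  have "gf2_rank (line_adj E tail head) R C \<le> card (out_row ` Y)"
    unfolding gf2_rank_def by (rule dim_le_card[OF rows_in_span]) (simp add: \<open>finite Y\<close>)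
  also have "\<dots> \<le> card Y" using \<open>finite Y\<close> by (rule card_image_le)
  finally show ?thesis .
qed

lemma bicut_rank_line_adj_le_fD:
  fixes E :: "'e set" and tail head :: "'e \<Rightarrow> 'v"
  assumes "finite E"
  shows "bicut_rank E (line_adj E tail head) X \<le> 2 * fD E tail head X"
proof -
  have finite_SV: "finite (SV E tail head Z)" for Z
    by (rule finite_subset[of _ "head ` E"]) (auto simp: SV_def \<open>finite E\<close>)
  have "gf2_rank (line_adj E tail head) (E - X) X \<le> card (SV E tail head X)"
    by (rule gf2_rank_line_adj_le[OF finite_SV]) (auto simp: SV_def)
  also have "\<dots> \<le> fD E tail head X"
    unfolding fD_def using finite_SV by (intro card_mono) auto
  moreover have "gf2_rank (line_adj E tail head) X (E - X) \<le> card (SV E tail head (E - X))"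
    by (rule gf2_rank_line_adj_le[OF finite_SV]) (auto simp: SV_def)
  moreover have "\<dots> \<le> fD E tail head X"
    unfolding fD_def using finite_SV by (intro card_mono) auto
  ultimately show ?thesis unfolding bicut_rank_def by linarith
qed

lemma finite_layout_orders:
  assumes "is_layout U N TE \<beta>"
  shows "finite {f (\<beta> ` tside N TE e a) | e a. e \<in> TE \<and> a \<in> e}"
proof -
  have "finite N" and "TE \<subseteq> Pow N"
    using assms unfolding is_layout_def is_tree_def by auto
  then have "finite (SIGMA e:TE. e)"
    by (intro finite_SigmaI) (auto intro: finite_subset)
  moreover have "{f (\<beta> ` tside N TE e a) | e a. e \<in> TE \<and> a \<in> e}
      = (\<lambda>(e, a). f (\<beta> ` tside N TE e a)) ` (SIGMA e:TE. e)"
    by auto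
  ultimately show ?thesis by simp
qed

lemma layout_width_of_le_scaled:
  fixes \<beta> :: "nat \<Rightarrow> 'u"
  assumes "is_layout U N TE \<beta>" and le: "\<And>X. g X \<le> c * f X"
  shows "layout_width_of g N TE \<beta> \<le> c * layout_width_of f N TE \<beta>"
proof -
  let ?orders = "\<lambda>h. insert 0 {h (\<beta> ` tside N TE e a) | e a. e \<in> TE \<and> a \<in> e}"
  have finite_orders: "finite (?orders h)" for h :: "'u set \<Rightarrow> nat"
    using finite_layout_orders[OF assms(1)] by simp
  have "x \<le> c * Max (?orders f)" if "x \<in> ?orders g" for x
  proof -
    from that consider "x = 0" | e a where "e \<in> TE" "a \<in> e" "x = g (\<beta> ` tside N TE e a)"
      by blast
    then show ?thesis
    proof cases
      case 2
      then have "f (\<beta> ` tside N TE e a) \<le> Max (?orders f)"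
        by (intro Max_ge[OF finite_orders]) blast
      then show ?thesis using 2 le[of "\<beta> ` tside N TE e a"] by (meson le_trans mult_le_mono2)
    qed simp
  qed
  then show ?thesis
    unfolding layout_width_of_def using finite_orders by (subst Max_le_iff) auto
qed

text \<open>The hypothesis \<open>c \<noteq> 0\<close> covers the case without layouts (e.g. \<open>U = {}\<close>), where both widths
  are the unspecified value \<open>Inf {} :: nat\<close>.\<close>

lemma layout_width_le_scaled:
  assumes "c \<noteq> 0" and "\<And>X. g X \<le> c * f X"
  shows "layout_width U g \<le> c * layout_width U f"
proof (cases "\<exists>N TE \<beta>. is_layout U N TE \<beta>")
  case True
  let ?widths = "\<lambda>h. {layout_width_of h N TE \<beta> | N TE \<beta>. is_layout U N TE \<beta>}"
  have "Inf (?widths f) \<in> ?widths f"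
    using True by (intro Inf_nat_def1) blast
  then obtain N TE \<beta> where layout: "is_layout U N TE \<beta>"
    and optimal: "layout_width U f = layout_width_of f N TE \<beta>"
    unfolding layout_width_def by blast
  have "layout_width U g \<le> layout_width_of g N TE \<beta>"
    unfolding layout_width_def using layout by (intro cInf_lower) blast+
  also have "\<dots> \<le> c * layout_width U f"
    unfolding optimal by (rule layout_width_of_le_scaled[OF layout assms(2)])
  finally show ?thesis .
next
  case False
  then show ?thesis using \<open>c \<noteq> 0\<close> by (simp add: layout_width_def)
qed

theorem mainTheorem2:
  fixes V :: "'v set" and E :: "'e set" and tail head :: "'e \<Rightarrow> 'v" and k :: nat
  assumes "digraph V E tail head"
    and "dbw E tail head \<le> k"
  shows "bcrk E (line_adj E tail head) \<le> 2 * (k + 1)"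
proof -
  have "finite E" using assms(1) by (simp add: digraph_def)
  have "bcrk E (line_adj E tail head) \<le> 2 * dbw E tail head"
    unfolding bcrk_def dbw_def
    by (rule layout_width_le_scaled) (simp_all add: bicut_rank_line_adj_le_fD[OF \<open>finite E\<close>])
  also have "\<dots> \<le> 2 * (k + 1)" using assms(2) by simp
  finally show ?thesis .
qed

end
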